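(* Let $\mathbf{X}=(X_1,X_2)$ and $\mathbf{Y}=(Y_1,Y_2)$ be jointly distributed random variables (the "past" and "future" states of a bivariate Markovian process). Let $\mathcal{A}$ and the product lattice $(\mathcal{A}\times\mathcal{A},\preceq)$ be as described in the context, and fix a single-target redundancy function $\texttt{Red}$. Suppose $I_\cap$ and $I'_\cap$ are two double-redundancy functions on $\mathcal{A}\times\mathcal{A}$ that both satisfy Axiom 1 (compatibility, with respect to this same $\texttt{Red}$) and Axiom 2 (partial ordering), and let $I_\partial$, $I'_\partial$ be their respective atoms defined via Möbius inversion. If $I_\partial^{\{\{1\},\{2\}\}\to\{\{1\},\{2\}\}} = I'^{\{\{1\},\{2\}\}\to\{\{1\},\{2\}\}}_\partial$, then $I_\partial^{\boldsymbol\alpha\to\boldsymbol\beta}=I'^{\boldsymbol\alpha\to\boldsymbol\beta}_\partial$ for all 16 nodes $\boldsymbol\alpha\to\boldsymbol\beta\in\mathcal{A}\times\mathcal{A}$. That is, Axioms 1 and 2 provide unique values for the 16 atoms once one specifies (i) a single-target redundancy function $\texttt{Red}$ and (ii) the value of the atom $I_\partial^{\{\{1\},\{2\}\}\to\{\{1\},\{2\}\}}$.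
   Context: $\mathcal{A}$ is the set of antichains of nonempty subsets of $\{1,2\}$: $\mathcal{A}=\{\{\{1\}\},\{\{2\}\},\{\{1,2\}\},\{\{1\},\{2\}\}\}$. For $\boldsymbol\alpha,\boldsymbol\beta\in\mathcal{A}$, $\boldsymbol\alpha\preceq\boldsymbol\beta$ iff for every $b\in\boldsymbol\beta$ there is $a\in\boldsymbol\alpha$ with $a\subseteq b$. Elements of $\mathcal{A}\times\mathcal{A}$ are written $\boldsymbol\alpha\to\boldsymbol\beta$, ordered by $\boldsymbol\alpha\to\boldsymbol\beta\preceq\boldsymbol\alpha'\to\boldsymbol\beta'$ iff $\boldsymbol\alpha\preceq\boldsymbol\alpha'$ and $\boldsymbol\beta\preceq\boldsymbol\beta'$ (16 nodes). For a subset $a=\{i_1,\dots,i_k\}\subseteq\{1,2\}$ write $\mathbf{X}^a=(X_{i_1},\dots,X_{i_k})$, similarly $\mathbf{Y}^a$. A single-target redundancy function $\texttt{Red}(Z_1,\dots,Z_J;T)$ assigns a real number to any finite collection of source random vectors $Z_1,\dots,Z_J$ and a target random vector $T$ (the partial-information-decomposition redundancy). A double-redundancy function assigns a real number $I_\cap^{\boldsymbol\alpha\to\boldsymbol\beta}$ to each node. Axiom 1 (compatibility): for $\boldsymbol\alpha=\{\alpha_1,\dots,\alpha_J\}$, $\boldsymbol\beta=\{\beta_1,\dots,\beta_K\}$: if $J=K=1$ then $I_\cap^{\boldsymbol\alpha\to\boldsymbol\beta}=I(\mathbf{X}^{\alpha_1};\mathbf{Y}^{\beta_1})$ (Shannon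 mutual information); if $K=1$ then $I_\cap^{\boldsymbol\alpha\to\boldsymbol\beta}=\texttt{Red}(\mathbf{X}^{\alpha_1},\dots,\mathbf{X}^{\alpha_J};\mathbf{Y}^{\beta_1})$; if $J=1$ then $I_\cap^{\boldsymbol\alpha\to\boldsymbol\beta}=\texttt{Red}(\mathbf{Y}^{\beta_1},\dots,\mathbf{Y}^{\beta_K};\mathbf{X}^{\alpha_1})$. Axiom 2 (partial ordering): if $\boldsymbol\alpha\to\boldsymbol\beta\preceq\boldsymbol\alpha'\to\boldsymbol\beta'$ then $I_\cap^{\boldsymbol\alpha\to\boldsymbol\beta}\le I_\cap^{\boldsymbol\alpha'\to\boldsymbol\beta'}$. The atoms $I_\partial^{\boldsymbol\alpha\to\boldsymbol\beta}$ are the unique numbers satisfying $I_\cap^{\boldsymbol\alpha\to\boldsymbol\beta}=\sum_{\boldsymbol\alpha'\to\boldsymbol\beta'\preceq\boldsymbol\alpha\to\boldsymbol\beta}I_\partial^{\boldsymbol\alpha'\to\boldsymbol\beta'}$ for all nodes, equivalently $I_\partial^{\boldsymbol\alpha\to\boldsymbol\beta}=I_\cap^{\boldsymbol\alpha\to\boldsymbol\beta}-\sum_{\boldsymbol\alpha'\to\boldsymbol\beta'\prec\boldsymbol\alpha\to\boldsymbol\beta}I_\partial^{\boldsymbol\alpha'\to\boldsymbol\beta'}$. *)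

theory Defs
  imports "HOL-Probability.Probability" "HOL-Library.Multiset"
begin

definition AC :: "nat set set set" where
  "AC = {{{1}}, {{2}}, {{1,2}}, {{1},{2}}}"

definition ac_le :: "nat set set \<Rightarrow> nat set set \<Rightarrow> bool" where
  "ac_le \<alpha> \<beta> \<longleftrightarrow> (\<forall>b\<in>\<beta>. \<exists>a\<in>\<alpha>. a \<subseteq> b)"

text \<open>Product order on nodes alpha -> beta, represented as pairs.\<close>
definition node_le :: "nat set set \<times> nat set set \<Rightarrow> nat set set \<times> nat set set \<Rightarrow> bool" where
  "node_le n m \<longleftrightarrow> ac_le (fst n) (fst m) \<and> ac_le (snd n) (snd m)"

definition subvec :: "(nat \<Rightarrow> 'a \<Rightarrow> 'b) \<Rightarrow> nat set \<Rightarrow> 'a \<Rightarrow> (nat \<Rightarrow> 'b)" where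
  "subvec Z a = (\<lambda>\<omega>. restrict (\<lambda>i. Z i \<omega>) a)"

definition MI :: "'a measure \<Rightarrow> ('a \<Rightarrow> 'c) \<Rightarrow> ('a \<Rightarrow> 'd) \<Rightarrow> real" where
  "MI M U V = prob_space.mutual_information M 2 (count_space UNIV) (count_space UNIV) U V"

definition compatible ::
  "'a measure \<Rightarrow> (nat \<Rightarrow> 'a \<Rightarrow> 'b) \<Rightarrow> (nat \<Rightarrow> 'a \<Rightarrow> 'b)
   \<Rightarrow> (('a \<Rightarrow> nat \<Rightarrow> 'b) multiset \<Rightarrow> ('a \<Rightarrow> nat \<Rightarrow> 'b) \<Rightarrow> real)
   \<Rightarrow> (nat set set \<Rightarrow> nat set set \<Rightarrow> real) \<Rightarrow> bool" where
  "compatible M X Y Red Icap \<longleftrightarrow>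
    (\<forall>\<alpha>\<in>AC. \<forall>\<beta>\<in>AC.
      (card \<alpha> = 1 \<and> card \<beta> = 1 \<longrightarrow>
         Icap \<alpha> \<beta> = MI M (subvec X (the_elem \<alpha>)) (subvec Y (the_elem \<beta>))) \<and>
      (card \<beta> = 1 \<longrightarrow>
         Icap \<alpha> \<beta> = Red (image_mset (subvec X) (mset_set \<alpha>)) (subvec Y (the_elem \<beta>))) \<and>
      (card \<alpha> = 1 \<longrightarrow>
         Icap \<alpha> \<beta> = Red (image_mset (subvec Y) (mset_set \<beta>)) (subvec X (the_elem \<alpha>))))"

definition monotone_dr :: "(nat set set \<Rightarrow> nat set set \<Rightarrow> real) \<Rightarrow> bool" where
  "monotone_dr Icap \<longleftrightarrow>
    (\<forall>\<alpha>\<in>AC. \<forall>\<beta>\<in>AC. \<forall>\<alpha>'\<in>AC. \<forall>\<beta>'\<in>AC.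
       node_le (\<alpha>, \<beta>) (\<alpha>', \<beta>') \<longrightarrow> Icap \<alpha> \<beta> \<le> Icap \<alpha>' \<beta>')"

definition atoms_of :: "(nat set set \<Rightarrow> nat set set \<Rightarrow> real) \<Rightarrow> (nat set set \<Rightarrow> nat set set \<Rightarrow> real) \<Rightarrow> bool" where
  "atoms_of Icap Ipart \<longleftrightarrow>
    (\<forall>\<alpha>\<in>AC. \<forall>\<beta>\<in>AC.
       Icap \<alpha> \<beta> = (\<Sum>n\<in>{n \<in> AC \<times> AC. node_le n (\<alpha>, \<beta>)}. Ipart (fst n) (snd n)))"

end

theory Submission
  imports Defs
begin

(* Axiom 1 pins down the double redundancy at every node except the bottom node
   {{1},{2}} -> {{1},{2}}, the only node at which both antichains have two elements.
   No other node lies below the bottom node, so its redundancy equals its own atom,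
   which is prescribed. Hence the two redundancy functions coincide on the whole
   lattice, and Moebius inversion on a finite poset is unique. *)

lemma moebius_inversion_unique:
  fixes le :: "'a \<Rightarrow> 'a \<Rightarrow> bool" and g g' :: "'a \<Rightarrow> 'b::ab_group_add"
  assumes "finite S"
    and le_refl: "\<And>x. x \<in> S \<Longrightarrow> le x x"
    and le_trans: "\<And>x y z. x \<in> S \<Longrightarrow> y \<in> S \<Longrightarrow> z \<in> S \<Longrightarrow> le x y \<Longrightarrow> le y z \<Longrightarrow> le x z"
    and le_antisym: "\<And>x y. x \<in> S \<Longrightarrow> y \<in> S \<Longrightarrow> le x y \<Longrightarrow> le y x \<Longrightarrow> x = y"
    and sums_eq: "\<And>x. x \<in> S \<Longrightarrow> (\<Sum>y\<in>{y \<in> S. le y x}. g y) = (\<Sum>y\<in>{y \<in> S. le y x}. g' y)"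
    and "x \<in> S"
  shows "g x = g' x"
  using \<open>x \<in> S\<close>
proof (induction "card {y \<in> S. le y x}" arbitrary: x rule: less_induct)
  case less
  define D where "D x = {y \<in> S. le y x}" for x
  have finite_D: "finite (D x)"
    unfolding D_def using \<open>finite S\<close> by simp
  have x_in_D: "x \<in> D x"
    unfolding D_def using less.prems le_refl by simp
  have below: "g y = g' y" if "y \<in> D x - {x}" for y
  proof -
    have y: "y \<in> S" "le y x" "y \<noteq> x"
      using that unfolding D_def by auto
    have "D y \<subseteq> D x"
      unfolding D_def using y less.prems le_trans by blast
    moreover have "x \<notin> D y"
      unfolding D_def using y less.prems le_antisym by blast
    ultimately have "card (D y) < card (D x)"
      using x_in_D finite_D by (metis psubsetI psubset_card_mono)
    then show ?thesis
      using less.hyps y(1) unfolding D_def by blast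
  qed
  have "g x + (\<Sum>y\<in>D x - {x}. g y) = g' x + (\<Sum>y\<in>D x - {x}. g' y)"
    using sums_eq[OF less.prems] finite_D x_in_D unfolding D_def
    by (simp add: sum.remove)
  moreover have "(\<Sum>y\<in>D x - {x}. g y) = (\<Sum>y\<in>D x - {x}. g' y)"
    using below by (rule sum.cong[OF refl])
  ultimately show ?case
    by simp
qed

lemma finite_AC: "finite AC"
  unfolding AC_def by simp

lemma ac_le_refl: "ac_le \<alpha> \<alpha>"
  unfolding ac_le_def by blast

lemma ac_le_trans: "ac_le \<alpha> \<beta> \<Longrightarrow> ac_le \<beta> \<gamma> \<Longrightarrow> ac_le \<alpha> \<gamma>"
  unfolding ac_le_def by (meson order_trans)

lemma ac_le_antisym: "\<alpha> \<in> AC \<Longrightarrow> \<beta> \<in> AC \<Longrightarrow> ac_le \<alpha> \<beta> \<Longrightarrow> ac_le \<beta> \<alpha> \<Longrightarrow> \<alpha> = \<beta>"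
  unfolding AC_def ac_le_def by auto

lemma ac_le_bottom_iff: "\<alpha> \<in> AC \<Longrightarrow> ac_le \<alpha> {{1},{2}} \<longleftrightarrow> \<alpha> = {{1},{2}}"
  unfolding AC_def ac_le_def by auto

lemma card_AC_eq_1: "\<alpha> \<in> AC \<Longrightarrow> \<alpha> \<noteq> {{1},{2}} \<Longrightarrow> card \<alpha> = 1"
  unfolding AC_def by auto

lemma atoms_of_unique:
  assumes "atoms_of Icap Ipart" "atoms_of Icap' Ipart'"
    and "\<And>\<alpha> \<beta>. \<alpha> \<in> AC \<Longrightarrow> \<beta> \<in> AC \<Longrightarrow> Icap \<alpha> \<beta> = Icap' \<alpha> \<beta>"
    and "\<alpha> \<in> AC" "\<beta> \<in> AC"
  shows "Ipart \<alpha> \<beta> = Ipart' \<alpha> \<beta>"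
proof -
  have "case_prod Ipart (\<alpha>, \<beta>) = case_prod Ipart' (\<alpha>, \<beta>)"
  proof (rule moebius_inversion_unique[where S = "AC \<times> AC" and le = node_le])
    show "finite (AC \<times> AC)"
      using finite_AC by simp
    show "node_le x x" for x
      unfolding node_le_def using ac_le_refl by blast
    show "node_le x z" if "node_le x y" "node_le y z" for x y z
      using that unfolding node_le_def using ac_le_trans by blast
    show "x = y" if "x \<in> AC \<times> AC" "y \<in> AC \<times> AC" "node_le x y" "node_le y x" for x y
      using that ac_le_antisym unfolding node_le_def by (simp add: prod_eq_iff mem_Times_iff)
    show "(\<Sum>y\<in>{y \<in> AC \<times> AC. node_le y x}. case_prod Ipart y)
        = (\<Sum>y\<in>{y \<in> AC \<times> AC. node_le y x}. case_prod Ipart' y)" if "x \<in> AC \<times> AC" for x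
      using that assms(1-3) unfolding atoms_of_def by (auto simp: case_prod_beta')
  qed (use assms(4,5) in simp)
  then show ?thesis
    by simp
qed

lemma atoms_of_bottom:
  assumes "atoms_of Icap Ipart"
  shows "Icap {{1},{2}} {{1},{2}} = Ipart {{1},{2}} {{1},{2}}"
proof -
  have "{n \<in> AC \<times> AC. node_le n ({{1},{2}}, {{1},{2}})} = {({{1},{2}}, {{1},{2}})}"
  proof (intro set_eqI iffI)
    fix n assume "n \<in> {n \<in> AC \<times> AC. node_le n ({{1},{2}}, {{1},{2}})}"
    then show "n \<in> {({{1},{2}}, {{1},{2}})}"
      unfolding node_le_def using ac_le_bottom_iff by (auto simp: prod_eq_iff)
  qed (simp_all add: node_le_def ac_le_refl AC_def)
  moreover have "{{1},{2}} \<in> AC"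
    unfolding AC_def by simp
  ultimately show ?thesis
    using assms unfolding atoms_of_def by simp
qed

lemma compatible_eq_off_bottom:
  assumes "compatible M X Y Red Icap" "compatible M X Y Red Icap'"
    and "\<alpha> \<in> AC" "\<beta> \<in> AC" "(\<alpha>, \<beta>) \<noteq> ({{1},{2}}, {{1},{2}})"
  shows "Icap \<alpha> \<beta> = Icap' \<alpha> \<beta>"
proof -
  have "card \<alpha> = 1 \<or> card \<beta> = 1"
    using assms(3-5) card_AC_eq_1 by auto
  then show ?thesis
    using assms(1-4) unfolding compatible_def by auto
qed

theorem proposition1:
  fixes M :: "'a measure"
    and X Y :: "nat \<Rightarrow> 'a \<Rightarrow> 'b"
    and Red :: "('a \<Rightarrow> nat \<Rightarrow> 'b) multiset \<Rightarrow> ('a \<Rightarrow> nat \<Rightarrow> 'b) \<Rightarrow> real"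
    and Icap Icap' Ipart Ipart' :: "nat set set \<Rightarrow> nat set set \<Rightarrow> real"
  assumes "prob_space M"
    and "\<And>i. i \<in> {1,2} \<Longrightarrow> X i \<in> measurable M (count_space UNIV)"
    and "\<And>i. i \<in> {1,2} \<Longrightarrow> Y i \<in> measurable M (count_space UNIV)"
    and "compatible M X Y Red Icap" and "monotone_dr Icap"
    and "compatible M X Y Red Icap'" and "monotone_dr Icap'"
    and "atoms_of Icap Ipart" and "atoms_of Icap' Ipart'"
    and "Ipart {{1},{2}} {{1},{2}} = Ipart' {{1},{2}} {{1},{2}}"
  shows "\<forall>\<alpha>\<in>AC. \<forall>\<beta>\<in>AC. Ipart \<alpha> \<beta> = Ipart' \<alpha> \<beta>"
proof -
  have "Icap {{1},{2}} {{1},{2}} = Icap' {{1},{2}} {{1},{2}}"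
    using atoms_of_bottom[OF assms(8)] atoms_of_bottom[OF assms(9)] assms(10) by simp
  then have "Icap \<alpha> \<beta> = Icap' \<alpha> \<beta>" if "\<alpha> \<in> AC" "\<beta> \<in> AC" for \<alpha> \<beta>
    using compatible_eq_off_bottom[OF assms(4,6) that] by blast
  then show ?thesis
    using atoms_of_unique[OF assms(8,9)] by blast
qed

end
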